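(* Let $\mathfrak{g}$ be a complex simply-laced symmetrizable Kac–Moody algebra with index set $I$ and Cartan matrix $(a_{i,j})$, and let $\lambda,\mu$ be dominant integral weights. Let $(i_1,\ldots,i_t)\in I^t$ with $i_p\ne i_q$ for $p\ne q$, and let $b_1,\ldots,b_t$ be nonnegative integers. Then $x=f_{i_1}^{b_1}\cdots f_{i_t}^{b_t}\pi_\lambda$ is nonzero and $\mu$-dominant if and only if \[ \lambda(\alpha_{i_t}^\vee)\ge b_t,\qquad \mu(\alpha_{i_1}^\vee)\ge b_1, \] \[ \mu(\alpha_{i_r}^\vee)\ge b_r+\sum_{s<r} b_s a_{i_s,i_r}\ \text{ for all }1<r\le t,\qquad \lambda(\alpha_{i_r}^\vee)\ge b_r+\sum_{s>r} b_s a_{i_s,i_r}\ \text{ for all }1\le r<t. \]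
   Context: Simply laced: $a_{i,i}=2$, $a_{i,j}\in\{0,-1\}$ for $i\ne j$. $B(\lambda)$ is Kashiwara's crystal of the irreducible integrable highest weight module $V(\lambda)$, with operators $e_i,f_i$ valued in $B(\lambda)\sqcup\{0\}$ and highest weight element $\pi_\lambda$; the monomial means $f_{i_t}^{b_t}$ is applied first. An element $\pi\in B(\lambda)$ is called $\mu$-dominant if $e_i^{\mu(\alpha_i^\vee)+1}\pi=0$ for all $i\in I$. *)

theory Defs
  imports Main "HOL-Analysis.Analysis"
begin

definition simply_laced :: "('i \<Rightarrow> 'i \<Rightarrow> int) \<Rightarrow> bool" where
  "simply_laced A \<longleftrightarrow> (\<forall>i. A i i = 2) \<and> (\<forall>i j. i \<noteq> j \<longrightarrow> A i j \<in> {0, -1}) \<and> (\<forall>i j. A i j = A j i)"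

definition dominant_integral :: "('i \<Rightarrow> 'v \<Rightarrow> real) \<Rightarrow> 'v \<Rightarrow> bool" where
  "dominant_integral coroot lam \<longleftrightarrow> (\<forall>i. coroot i lam \<in> \<nat>)"

definition sref :: "('i \<Rightarrow> 'v::real_vector) \<Rightarrow> ('i \<Rightarrow> 'v \<Rightarrow> real) \<Rightarrow> 'i \<Rightarrow> 'v \<Rightarrow> 'v" where
  "sref alpha coroot i v = v - coroot i v *\<^sub>R alpha i"

text \<open>Littelmann root operator f_i on paths [0,1] -> h*_R (None encodes 0).\<close>
definition froot :: "('i \<Rightarrow> 'v::real_vector) \<Rightarrow> ('i \<Rightarrow> 'v \<Rightarrow> real) \<Rightarrow> 'i \<Rightarrow> (real \<Rightarrow> 'v) \<Rightarrow> (real \<Rightarrow> 'v) option" where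
  "froot alpha coroot i \<pi> =
    (let h = (\<lambda>t. coroot i (\<pi> t)); m = Inf (h ` {0..1}) in
     if h 1 - m < 1 then None else
     (let P = Sup {t \<in> {0..1}. h t = m}; x = Inf {t \<in> {P..1}. h t = m + 1} in
      Some (\<lambda>t. if t \<le> P then \<pi> t
                else if t \<le> x then \<pi> P + sref alpha coroot i (\<pi> t - \<pi> P)
                else \<pi> t - alpha i)))"

text \<open>Littelmann root operator e_i on paths (None encodes 0).\<close>
definition eroot :: "('i \<Rightarrow> 'v::real_vector) \<Rightarrow> ('i \<Rightarrow> 'v \<Rightarrow> real) \<Rightarrow> 'i \<Rightarrow> (real \<Rightarrow> 'v) \<Rightarrow> (real \<Rightarrow> 'v) option" where
  "eroot alpha coroot i \<pi> =
    (let h = (\<lambda>t. coroot i (\<pi> t)); m = Inf (h ` {0..1}) in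
     if m > -1 then None else
     (let Q = Inf {t \<in> {0..1}. h t = m}; y = Sup {t \<in> {0..Q}. h t = m + 1} in
      Some (\<lambda>t. if t \<le> y then \<pi> t
                else if t \<le> Q then \<pi> y + sref alpha coroot i (\<pi> t - \<pi> y)
                else \<pi> t + alpha i)))"

definition fop where "fop alpha coroot i x = Option.bind x (froot alpha coroot i)"
definition eop where "eop alpha coroot i x = Option.bind x (eroot alpha coroot i)"

definition pi_hw :: "'v::real_vector \<Rightarrow> real \<Rightarrow> 'v" where
  "pi_hw lam = (\<lambda>t. t *\<^sub>R lam)"

text \<open>The monomial f_{i_1}^{b_1} ... f_{i_t}^{b_t} pi_lambda (f_{i_t}^{b_t} applied first).\<close>
definition monomial where
  "monomial alpha coroot ii b t lam =
     foldr (\<lambda>r acc. (fop alpha coroot (ii r) ^^ b r) acc) [1..<Suc t] (Some (pi_hw lam))"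

definition mu_dominant where
  "mu_dominant alpha coroot mu x \<longleftrightarrow>
     (\<forall>i. (eop alpha coroot i ^^ (nat \<lfloor>coroot i mu\<rfloor> + 1)) x = None)"

end

(*
  In the path model the monomial can be computed explicitly because the i_r are distinct.
  Along the path reached before f_{i_s}^{b_s} is applied, h_{i_s} is nondecreasing (only
  f_j with a_{i_s,j} <= 0 have acted), so f_{i_s}^{b_s} merely subtracts alpha_{i_s} while
  h_{i_s} climbs from 0 to b_s; it is nonzero iff h_{i_s}(1) >= b_s, and these conditions
  unwind to the lambda-inequalities.  Along the final path, h_{i_r} first rises, falls
  once all later neighbours of i_r are saturated and rises again, so its minimum is
  min(0, sum of b_s over those neighbours - b_r).  Since e_i^n kills a path exactly
  when n exceeds minus the minimum of h_i (for paths satisfying an integrality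
  condition that e_i preserves), mu-dominance is equivalent to the mu-inequalities.
*)
theory Submission
  imports Defs
begin

lemma level_set_Sup:
  fixes h :: "real \<Rightarrow> real"
  assumes "continuous_on {a..b} h" and "\<tau> \<in> {a..b}" and "h \<tau> = c"
  shows "Sup {x \<in> {a..b}. h x = c} \<in> {x \<in> {a..b}. h x = c}"
    and "\<And>x. x \<in> {a..b} \<Longrightarrow> h x = c \<Longrightarrow> x \<le> Sup {x \<in> {a..b}. h x = c}"
proof -
  have bdd: "bdd_above {x \<in> {a..b}. h x = c}" by (rule bdd_aboveI[of _ b]) auto
  show "Sup {x \<in> {a..b}. h x = c} \<in> {x \<in> {a..b}. h x = c}"
    using assms by (intro closed_contains_Sup bdd continuous_closed_preimage_constant) auto
  show "\<And>x. x \<in> {a..b} \<Longrightarrow> h x = c \<Longrightarrow> x \<le> Sup {x \<in> {a..b}. h x = c}"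
    by (rule cSup_upper[OF _ bdd]) auto
qed

lemma level_set_Inf:
  fixes h :: "real \<Rightarrow> real"
  assumes "continuous_on {a..b} h" and "\<tau> \<in> {a..b}" and "h \<tau> = c"
  shows "Inf {x \<in> {a..b}. h x = c} \<in> {x \<in> {a..b}. h x = c}"
    and "\<And>x. x \<in> {a..b} \<Longrightarrow> h x = c \<Longrightarrow> Inf {x \<in> {a..b}. h x = c} \<le> x"
proof -
  have bdd: "bdd_below {x \<in> {a..b}. h x = c}" by (rule bdd_belowI[of _ a]) auto
  show "Inf {x \<in> {a..b}. h x = c} \<in> {x \<in> {a..b}. h x = c}"
    using assms by (intro closed_contains_Inf bdd continuous_closed_preimage_constant) auto
  show "\<And>x. x \<in> {a..b} \<Longrightarrow> h x = c \<Longrightarrow> Inf {x \<in> {a..b}. h x = c} \<le> x"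
    by (rule cInf_lower[OF _ bdd]) auto
qed

lemma continuous_on_if_le:
  fixes f g :: "real \<Rightarrow> 'a::topological_space"
  assumes "continuous_on {a..c} f" and "continuous_on {c..b} g" and "f c = g c"
  shows "continuous_on {a..b} (\<lambda>x. if x \<le> c then f x else g x)"
proof (rule continuous_on_cases_le[where h = "\<lambda>x. x"])
  show "continuous_on {x \<in> {a..b}. x \<le> c} f" by (rule continuous_on_subset[OF assms(1)]) auto
  show "continuous_on {x \<in> {a..b}. c \<le> x} g" by (rule continuous_on_subset[OF assms(2)]) auto
qed (use assms(3) in \<open>auto intro: continuous_on_id\<close>)

lemma Inf_image_eq_minimum:
  fixes F :: "'a \<Rightarrow> 'b::conditionally_complete_lattice"
  assumes "\<tau> \<in> S" and "F \<tau> = m" and "\<And>x. x \<in> S \<Longrightarrow> m \<le> F x"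
  shows "Inf (F ` S) = m"
  using assms by (intro cInf_eq_minimum) auto

lemma min_sum_le_sum_min:
  fixes g :: "'a \<Rightarrow> 'b::linordered_ab_group_add"
  assumes "0 \<le> x" and "\<And>s. s \<in> N \<Longrightarrow> 0 \<le> g s"
  shows "min x (sum g N) \<le> (\<Sum>s\<in>N. min x (g s))"
proof (cases "finite N")
  case True
  then show ?thesis using assms(2)
  proof (induction N rule: finite_induct)
    case (insert a N)
    have "0 \<le> sum g N" "0 \<le> g a" using insert.prems by (auto intro: sum_nonneg)
    then have "min x (g a + sum g N) \<le> min x (g a) + min x (sum g N)"
      using assms(1) by (auto simp: min_def intro: add_increasing add_increasing2)
    also have "\<dots> \<le> min x (g a) + (\<Sum>s\<in>N. min x (g s))" using insert by simp
    finally show ?case using insert.hyps by simp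
  qed (use assms(1) in simp)
qed (use assms(1) in simp)

lemma neg_min_less_Suc_iff:
  fixes B c n :: nat
  shows "- min 0 (int B - int c) < int (n + 1) \<longleftrightarrow> real c - real B \<le> real n"
proof -
  have "- min 0 (int B - int c) < int (n + 1) \<longleftrightarrow> int c - int B \<le> int n"
    by (cases "int B \<le> int c") (auto simp: min_def)
  also have "\<dots> \<longleftrightarrow> real_of_int (int c - int B) \<le> real_of_int (int n)"
    by (rule of_int_le_iff[symmetric])
  finally show ?thesis by simp
qed

lemma fop_pow_None: "(fop alpha coroot i ^^ k) None = None"
  by (induction k) (auto simp: fop_def)

lemma eop_pow_None: "(eop alpha coroot i ^^ k) None = None"
  by (induction k) (auto simp: eop_def)

lemma froot_eq_None:
  assumes "Inf ((\<lambda>\<tau>. coroot i (\<pi> \<tau>)) ` {0..1}) = m" and "coroot i (\<pi> 1) - m < 1"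
  shows "froot alpha coroot i \<pi> = None"
  using assms by (simp add: froot_def Let_def)

lemma froot_eq_Some:
  assumes "Inf ((\<lambda>\<tau>. coroot i (\<pi> \<tau>)) ` {0..1}) = m" and "\<not> coroot i (\<pi> 1) - m < 1"
    and "Sup {\<tau> \<in> {0..1}. coroot i (\<pi> \<tau>) = m} = P"
    and "Inf {\<tau> \<in> {P..1}. coroot i (\<pi> \<tau>) = m + 1} = x"
  shows "froot alpha coroot i \<pi> = Some (\<lambda>\<tau>. if \<tau> \<le> P then \<pi> \<tau>
                else if \<tau> \<le> x then \<pi> P + sref alpha coroot i (\<pi> \<tau> - \<pi> P)
                else \<pi> \<tau> - alpha i)"
  unfolding froot_def Let_def assms(1) using assms(2) by (simp only: if_False assms(3,4))

lemma eroot_eq_None: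
  assumes "Inf ((\<lambda>\<tau>. coroot i (\<pi> \<tau>)) ` {0..1}) = m" and "m > -1"
  shows "eroot alpha coroot i \<pi> = None"
  using assms by (simp add: eroot_def Let_def)

lemma eroot_eq_Some:
  assumes "Inf ((\<lambda>\<tau>. coroot i (\<pi> \<tau>)) ` {0..1}) = m" and "\<not> m > -1"
    and "Inf {\<tau> \<in> {0..1}. coroot i (\<pi> \<tau>) = m} = Q"
    and "Sup {\<tau> \<in> {0..Q}. coroot i (\<pi> \<tau>) = m + 1} = y"
  shows "eroot alpha coroot i \<pi> = Some (\<lambda>\<tau>. if \<tau> \<le> y then \<pi> \<tau>
                else if \<tau> \<le> Q then \<pi> y + sref alpha coroot i (\<pi> \<tau> - \<pi> y)
                else \<pi> \<tau> + alpha i)"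
  unfolding eroot_def Let_def assms(1) using assms(2) by (simp only: if_False assms(3,4))

section \<open>The operators \<open>f\<^sub>j\<close> on paths with nondecreasing \<open>h\<^sub>j\<close>\<close>

definition lower_path :: "('i \<Rightarrow> 'v::real_vector) \<Rightarrow> ('i \<Rightarrow> 'v \<Rightarrow> real) \<Rightarrow> 'i \<Rightarrow> real \<Rightarrow>
    (real \<Rightarrow> 'v) \<Rightarrow> real \<Rightarrow> 'v" where
  "lower_path alpha coroot j c p \<tau> = p \<tau> - min (max (coroot j (p \<tau>)) 0) c *\<^sub>R alpha j"

lemma lower_path_0: "lower_path alpha coroot j 0 p = p"
  by (rule ext) (simp add: lower_path_def)

lemma coroot_lower_path:
  assumes "linear (coroot j)" and "coroot j (alpha j) = 2"
  shows "coroot j (lower_path alpha coroot j c p \<tau>) = coroot j (p \<tau>) - 2 * min (max (coroot j (p \<tau>)) 0) c"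
  using assms by (simp add: lower_path_def linear_diff linear_scale)

text \<open>On a path along which \<open>h\<^sub>j\<close> is nondecreasing, \<open>f\<^sub>j\<close> reflects the stretch where \<open>h\<^sub>j\<close> climbs
  from \<open>k\<close> to \<open>k + 1\<close> and lowers the rest by \<open>\<alpha>\<^sub>j\<close>; on \<open>lower_path k p\<close> this adds one more
  unit to the clamp.\<close>

lemma froot_formula_lower_path:
  fixes p :: "real \<Rightarrow> 'v::real_vector"
  assumes lin: "linear (coroot j)" and aj: "coroot j (alpha j) = 2"
    and mono: "mono (\<lambda>\<tau>. coroot j (p \<tau>))"
    and P: "coroot j (p P) = real k" and x: "coroot j (p x) = real k + 1"
  defines "q \<equiv> lower_path alpha coroot j (real k) p"
  shows "(\<lambda>\<tau>. if \<tau> \<le> P then q \<tau> else if \<tau> \<le> x then q P + sref alpha coroot j (q \<tau> - q P)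
      else q \<tau> - alpha j) = lower_path alpha coroot j (real (Suc k)) p"
proof
  fix \<tau>
  define h where "h = (\<lambda>\<tau>. coroot j (p \<tau>))"
  have h_mono: "h u \<le> h v" if "u \<le> v" for u v using monoD[OF mono that] by (simp add: h_def)
  have "P < x" using h_mono[of x P] P x by (force simp: h_def)
  consider "\<tau> \<le> P" | "P < \<tau>" "\<tau> \<le> x" | "x < \<tau>" by linarith
  then show "(if \<tau> \<le> P then q \<tau> else if \<tau> \<le> x then q P + sref alpha coroot j (q \<tau> - q P)
      else q \<tau> - alpha j) = lower_path alpha coroot j (real (Suc k)) p \<tau>"
  proof cases
    case 1
    then show ?thesis using h_mono[OF 1] P by (simp add: q_def lower_path_def h_def min_def max_def)
  next
    case 2
    have k_le: "real k \<le> h \<tau>" and le_Suc_k: "h \<tau> \<le> real k + 1"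
      using h_mono[of P \<tau>] h_mono[of \<tau> x] 2 P x by (auto simp: h_def)
    have q_\<tau>: "q \<tau> = p \<tau> - real k *\<^sub>R alpha j"
      using k_le by (simp add: q_def lower_path_def h_def)
    have diff: "coroot j (q \<tau>) - coroot j (q P) = h \<tau> - real k"
      using k_le P by (simp add: q_def coroot_lower_path[where alpha = alpha and coroot = coroot and j = j, OF lin aj] h_def)
    have "q P + sref alpha coroot j (q \<tau> - q P) = q \<tau> - (coroot j (q \<tau>) - coroot j (q P)) *\<^sub>R alpha j"
      using lin by (simp add: sref_def linear_diff algebra_simps)
    also have "\<dots> = q \<tau> - (h \<tau> - real k) *\<^sub>R alpha j" by (simp only: diff)
    also have "\<dots> = p \<tau> - h \<tau> *\<^sub>R alpha j" by (simp add: q_\<tau> algebra_simps)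
    finally show ?thesis using 2 k_le le_Suc_k by (simp add: lower_path_def h_def)
  next
    case 3
    then show ?thesis
      using h_mono[of x \<tau>] x \<open>P < x\<close> by (simp add: q_def lower_path_def h_def algebra_simps)
  qed
qed

lemma froot_lower_path:
  fixes p :: "real \<Rightarrow> 'v::real_vector"
  assumes lin: "linear (coroot j)" and aj: "coroot j (alpha j) = 2"
    and mono: "mono (\<lambda>\<tau>. coroot j (p \<tau>))" and cont: "continuous_on {0..1} (\<lambda>\<tau>. coroot j (p \<tau>))"
    and h0: "coroot j (p 0) = 0" and k: "real k \<le> coroot j (p 1)"
  shows "froot alpha coroot j (lower_path alpha coroot j (real k) p) =
    (if real (Suc k) \<le> coroot j (p 1) then Some (lower_path alpha coroot j (real (Suc k)) p) else None)"
proof -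
  define h where "h = (\<lambda>\<tau>. coroot j (p \<tau>))"
  define q where "q = lower_path alpha coroot j (real k) p"
  have h_cont: "continuous_on {0..1} h" using cont by (simp add: h_def)
  have h_mono: "h u \<le> h v" if "u \<le> v" for u v using monoD[OF mono that] by (simp add: h_def)
  have h_nonneg: "0 \<le> h \<tau>" if "0 \<le> \<tau>" for \<tau> using h_mono[OF that] h0 by (simp add: h_def)
  have hq: "coroot j (q \<tau>) = h \<tau> - 2 * min (h \<tau>) (real k)" if "0 \<le> \<tau>" for \<tau>
    using h_nonneg[OF that] by (simp add: q_def coroot_lower_path[where alpha = alpha and coroot = coroot and j = j, OF lin aj] h_def)
  obtain \<tau>0 where \<tau>0: "\<tau>0 \<in> {0..1}" "h \<tau>0 = real k"
    using IVT'[of h 0 "real k" 1] h_cont k h0 by (auto simp: h_def)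
  have min_q: "Inf ((\<lambda>\<tau>. coroot j (q \<tau>)) ` {0..1}) = - real k"
    by (rule Inf_image_eq_minimum[OF \<tau>0(1)]) (use \<tau>0 hq h_nonneg in auto)
  have q_1: "coroot j (q 1) = h 1 - 2 * real k" using hq[of 1] k by (simp add: h_def)
  show ?thesis
  proof (cases "real (Suc k) \<le> h 1")
    case False
    then show ?thesis
      using froot_eq_None[where coroot = coroot and i = j and \<pi> = q, OF min_q] q_1 by (simp add: q_def h_def)
  next
    case True
    define P where "P = Sup {\<tau> \<in> {0..1}. h \<tau> = real k}"
    have P: "P \<in> {0..1}" "h P = real k"
      using level_set_Sup(1)[OF h_cont \<tau>0] by (simp_all add: P_def)
    have h_cont_P: "continuous_on {P..1} h" using continuous_on_subset[OF h_cont] P by auto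
    obtain \<tau>1 where \<tau>1: "\<tau>1 \<in> {P..1}" "h \<tau>1 = real k + 1"
      using IVT'[of h P "real k + 1" 1] True P h_cont_P by auto
    define x where "x = Inf {\<tau> \<in> {P..1}. h \<tau> = real k + 1}"
    have x: "h x = real k + 1"
      using level_set_Inf(1)[OF h_cont_P \<tau>1] by (simp add: x_def)
    have "coroot j (q \<tau>) = - real k \<longleftrightarrow> h \<tau> = real k" if "0 \<le> \<tau>" for \<tau>
      using hq[OF that] h_nonneg[OF that] by (auto simp: min_def)
    then have "{\<tau> \<in> {0..1}. coroot j (q \<tau>) = - real k} = {\<tau> \<in> {0..1}. h \<tau> = real k}"
      by auto
    moreover have "coroot j (q \<tau>) = - real k + 1 \<longleftrightarrow> h \<tau> = real k + 1" if "P \<le> \<tau>" for \<tau>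
      using hq[of \<tau>] h_mono[OF that] P that by (auto simp: min_def)
    then have "{\<tau> \<in> {P..1}. coroot j (q \<tau>) = - real k + 1} = {\<tau> \<in> {P..1}. h \<tau> = real k + 1}"
      by auto
    ultimately have "froot alpha coroot j q = Some (\<lambda>\<tau>. if \<tau> \<le> P then q \<tau>
        else if \<tau> \<le> x then q P + sref alpha coroot j (q \<tau> - q P) else q \<tau> - alpha j)"
      using True q_1 P_def x_def
      by (intro froot_eq_Some[where coroot = coroot and i = j and \<pi> = q, OF min_q]) simp_all
    also have "\<dots> = Some (lower_path alpha coroot j (real (Suc k)) p)"
      unfolding q_def using P x
      by (intro arg_cong[where f = Some]
          froot_formula_lower_path[where alpha = alpha and coroot = coroot and j = j and p = p, OF lin aj mono])
        (simp_all add: h_def)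
    finally show ?thesis using True by (simp add: q_def h_def)
  qed
qed

lemma fop_pow_monotone_path:
  fixes p :: "real \<Rightarrow> 'v::real_vector"
  assumes "linear (coroot j)" and "coroot j (alpha j) = 2"
    and "mono (\<lambda>\<tau>. coroot j (p \<tau>))" and "continuous_on {0..1} (\<lambda>\<tau>. coroot j (p \<tau>))"
    and "coroot j (p 0) = 0"
  shows "(fop alpha coroot j ^^ k) (Some p) =
    (if real k \<le> coroot j (p 1) then Some (lower_path alpha coroot j (real k) p) else None)"
proof (induction k)
  case 0
  then show ?case using monoD[OF assms(3), of 0 1] assms(5) by (simp add: lower_path_0)
next
  case (Suc k)
  show ?case
  proof (cases "real k \<le> coroot j (p 1)")
    case True
    then show ?thesis
      using Suc froot_lower_path[where alpha = alpha and coroot = coroot and j = j and p = p, OF assms True]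
      by (simp add: fop_def)
  next
    case False
    then show ?thesis using Suc by (simp add: fop_def fop_pow_None)
  qed
qed

section \<open>The operators \<open>e\<^sub>j\<close> on integral paths\<close>

text \<open>A weak form of Littelmann's integrality of paths: once \<open>F\<close> has
  dropped below an integer \<open>k\<close>, it cannot climb back to \<open>k\<close> before reaching \<open>k - 1\<close>. Unlike
  ``all local minima are integers'' it is preserved by \<open>e\<^sub>j\<close>.\<close>

definition integral_minima :: "(real \<Rightarrow> real) \<Rightarrow> bool" where
  "integral_minima F \<longleftrightarrow> (\<forall>t\<in>{0..1}. \<forall>k::int.
     (\<forall>s\<in>{0..t}. of_int k - 1 < F s) \<longrightarrow> (\<exists>s\<in>{0..t}. F s < of_int k) \<longrightarrow> F t < of_int k)"

definition integral_profile :: "(real \<Rightarrow> real) \<Rightarrow> int \<Rightarrow> bool" where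
  "integral_profile F m \<longleftrightarrow> continuous_on {0..1} F \<and> F 0 = 0 \<and>
     (\<forall>\<tau>\<in>{0..1}. of_int m \<le> F \<tau>) \<and> (\<exists>\<tau>\<in>{0..1}. F \<tau> = of_int m) \<and> integral_minima F"

lemma integral_minima_nonneg:
  assumes "\<And>x. x \<in> {0..1} \<Longrightarrow> 0 \<le> F x" and "F 0 = 0"
  shows "integral_minima F"
  unfolding integral_minima_def
proof (intro ballI allI impI)
  fix t k
  assume t: "t \<in> {0..1}" and above: "\<forall>s\<in>{0..t}. of_int k - 1 < F s"
    and below: "\<exists>s\<in>{0..t}. F s < of_int k"
  have "0 \<in> {0..t}" using t by simp
  then have "of_int k - 1 < (0::real)" using above assms(2) by fastforce
  then have "k \<le> 0" by simp
  moreover obtain s where "s \<in> {0..t}" "F s < of_int k" using below by blast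
  moreover have "0 \<le> F s" using assms(1)[of s] \<open>s \<in> {0..t}\<close> t by simp
  ultimately show "F t < of_int k" by linarith
qed

lemma integral_minima_after_minimum:
  assumes F: "integral_minima F" and y: "y \<in> {0..1}" and agree: "\<And>s. s \<in> {0..y} \<Longrightarrow> G s = F s"
    and G_y: "G y = of_int n" and G_lb: "\<And>s. s \<in> {0..1} \<Longrightarrow> of_int n \<le> G s"
  shows "integral_minima G"
  unfolding integral_minima_def
proof (intro ballI allI impI)
  fix t k
  assume t: "t \<in> {0..1}" and above: "\<forall>s\<in>{0..t}. of_int k - 1 < G s"
    and below: "\<exists>s\<in>{0..t}. G s < of_int k"
  show "G t < of_int k"
  proof (cases "t \<le> y")
    case True
    then have "\<forall>s\<in>{0..t}. of_int k - 1 < F s" "\<exists>s\<in>{0..t}. F s < of_int k"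
      using above below agree by auto
    then have "F t < of_int k" using F t unfolding integral_minima_def by blast
    then show ?thesis using True agree t by simp
  next
    case False
    then have "y \<in> {0..t}" using y by simp
    then have "of_int k - 1 < (of_int n :: real)" using above G_y by fastforce
    then have "of_int k \<le> (of_int n :: real)" by simp
    moreover obtain s where "s \<in> {0..t}" "G s < of_int k" using below by blast
    moreover have "of_int n \<le> G s" using G_lb[of s] \<open>s \<in> {0..t}\<close> t by simp
    ultimately show ?thesis by linarith
  qed
qed

text \<open>Integrality forces \<open>F \<ge> m + 1\<close>
  up to \<open>y\<close>.\<close>

lemma eroot_turning_points:
  fixes F :: "real \<Rightarrow> real" and m :: int
  assumes F: "integral_profile F m" and m: "m \<le> -1"
    and Q_def: "Q = Inf {\<tau> \<in> {0..1}. F \<tau> = of_int m}"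
    and y_def: "y = Sup {\<tau> \<in> {0..Q}. F \<tau> = of_int m + 1}"
  shows "0 \<le> y" and "y < Q" and "Q \<le> 1" and "F Q = of_int m" and "F y = of_int m + 1"
    and "\<And>\<tau>. \<tau> \<in> {0..y} \<Longrightarrow> of_int m + 1 \<le> F \<tau>"
    and "\<And>\<tau>. y < \<tau> \<Longrightarrow> \<tau> \<le> Q \<Longrightarrow> F \<tau> \<le> of_int m + 1"
proof -
  obtain \<tau>m where \<tau>m: "\<tau>m \<in> {0..1}" "F \<tau>m = of_int m" using F by (auto simp: integral_profile_def)
  have cont: "continuous_on {0..1} F" and F0: "F 0 = 0"
    and lb: "\<And>\<tau>. \<tau> \<in> {0..1} \<Longrightarrow> of_int m \<le> F \<tau>" and int: "integral_minima F"
    using F by (auto simp: integral_profile_def)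
  have Q: "Q \<in> {0..1}" "F Q = of_int m"
    using level_set_Inf(1)[OF cont \<tau>m] by (simp_all add: Q_def)
  have Q_first: "Q \<le> \<tau>" if "\<tau> \<in> {0..1}" "F \<tau> = of_int m" for \<tau>
    using level_set_Inf(2)[OF cont \<tau>m that] by (simp add: Q_def)
  have cont_Q: "continuous_on {0..Q} F" using continuous_on_subset[OF cont] Q by auto
  obtain \<tau>1 where \<tau>1: "\<tau>1 \<in> {0..Q}" "F \<tau>1 = of_int m + 1"
    using IVT2'[of F Q "of_int m + 1" 0] cont_Q Q F0 m by auto
  have y: "y \<in> {0..Q}" "F y = of_int m + 1"
    using level_set_Sup(1)[OF cont_Q \<tau>1] by (simp_all add: y_def)
  have y_last: "\<tau> \<le> y" if "\<tau> \<in> {0..Q}" "F \<tau> = of_int m + 1" for \<tau>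
    using level_set_Sup(2)[OF cont_Q \<tau>1 that] by (simp add: y_def)
  have "y < Q" using y Q by (cases "y = Q") auto
  then show "0 \<le> y" "y < Q" "Q \<le> 1" "F Q = of_int m" "F y = of_int m + 1" using y Q by auto
  show "of_int m + 1 \<le> F \<tau>" if \<tau>: "\<tau> \<in> {0..y}" for \<tau>
  proof (rule ccontr)
    assume "\<not> of_int m + 1 \<le> F \<tau>"
    moreover have "\<forall>s\<in>{0..y}. of_int (m + 1) - 1 < F s"
    proof
      fix s assume s: "s \<in> {0..y}"
      then have s01: "s \<in> {0..1}" and "s < Q" using \<open>y < Q\<close> Q by auto
      then have "F s \<noteq> of_int m" using Q_first[OF s01] by fastforce
      then show "of_int (m + 1) - 1 < F s" using lb[OF s01] by simp
    qed
    moreover have "\<exists>s\<in>{0..y}. F s < of_int (m + 1)"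
      using \<open>\<not> of_int m + 1 \<le> F \<tau>\<close> \<tau> by (intro bexI[of _ \<tau>]) auto
    moreover have "y \<in> {0..1}" using y Q by simp
    ultimately have "F y < of_int (m + 1)" using int unfolding integral_minima_def by blast
    then show False using y by simp
  qed
  show "F \<tau> \<le> of_int m + 1" if \<tau>: "y < \<tau>" "\<tau> \<le> Q" for \<tau>
  proof (rule ccontr)
    assume "\<not> F \<tau> \<le> of_int m + 1"
    moreover have "continuous_on {\<tau>..Q} F" using continuous_on_subset[OF cont_Q] \<tau> y by auto
    ultimately obtain z where "\<tau> \<le> z" "z \<le> Q" "F z = of_int m + 1"
      using IVT2'[of F Q "of_int m + 1" \<tau>] Q \<tau> by auto
    then show False using y_last[of z] \<tau> y by auto
  qed
qed

lemma eroot_raises_minimum: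
  fixes p :: "real \<Rightarrow> 'v::real_vector" and m :: int
  assumes lin: "linear (coroot j)" and aj: "coroot j (alpha j) = 2"
    and F: "integral_profile (\<lambda>\<tau>. coroot j (p \<tau>)) m" and m: "m \<le> -1"
  obtains p' where "eroot alpha coroot j p = Some p'"
    and "integral_profile (\<lambda>\<tau>. coroot j (p' \<tau>)) (m + 1)"
proof -
  define F where "F = (\<lambda>\<tau>. coroot j (p \<tau>))"
  define Q where "Q = Inf {\<tau> \<in> {0..1}. F \<tau> = of_int m}"
  define y where "y = Sup {\<tau> \<in> {0..Q}. F \<tau> = of_int m + 1}"
  have cont: "continuous_on {0..1} F" and F0: "F 0 = 0" and int: "integral_minima F"
    and lb: "\<And>\<tau>. \<tau> \<in> {0..1} \<Longrightarrow> of_int m \<le> F \<tau>" and att: "\<exists>\<tau>\<in>{0..1}. F \<tau> = of_int m"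
    using F by (auto simp: integral_profile_def F_def)
  note turn = eroot_turning_points[OF F[folded F_def] m Q_def y_def]
  define p' where "p' = (\<lambda>\<tau>. if \<tau> \<le> y then p \<tau>
      else if \<tau> \<le> Q then p y + sref alpha coroot j (p \<tau> - p y) else p \<tau> + alpha j)"
  have "Inf (F ` {0..1}) = of_int m" using att lb by (auto intro: Inf_image_eq_minimum)
  then have e: "eroot alpha coroot j p = Some p'"
    unfolding p'_def using m Q_def y_def by (intro eroot_eq_Some) (simp_all add: F_def)
  define F' where "F' = (\<lambda>\<tau>. if \<tau> \<le> y then F \<tau> else if \<tau> \<le> Q then 2 * (of_int m + 1) - F \<tau> else F \<tau> + 2)"
  have "coroot j (p y + sref alpha coroot j (p \<tau> - p y)) = 2 * F y - F \<tau>" for \<tau>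
    using lin aj by (simp add: sref_def F_def linear_add linear_diff linear_scale algebra_simps)
  then have F'_eq: "(\<lambda>\<tau>. coroot j (p' \<tau>)) = F'"
    using turn(5) lin aj by (auto simp: p'_def F'_def F_def linear_add)
  have "continuous_on {0..1} F'"
    unfolding F'_def using turn(1-5)
    by (intro continuous_on_if_le continuous_intros continuous_on_subset[OF cont]) auto
  moreover have F'_lb: "of_int (m + 1) \<le> F' \<tau>" if "\<tau> \<in> {0..1}" for \<tau>
    using turn(6,7)[of \<tau>] lb[of \<tau>] that turn(2) by (auto simp: F'_def)
  moreover have "F' y = of_int (m + 1)" "y \<in> {0..1}" using turn(1-3,5) by (auto simp: F'_def)
  moreover have "F' 0 = 0" using turn(1) F0 by (simp add: F'_def)
  moreover have "integral_minima F'"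
    by (rule integral_minima_after_minimum[where F = F and G = F', OF int \<open>y \<in> {0..1}\<close> _
          \<open>F' y = of_int (m + 1)\<close> F'_lb]) (simp add: F'_def)
  ultimately have "integral_profile F' (m + 1)"
    unfolding integral_profile_def by auto
  then show thesis using that[OF e] by (simp add: F'_eq)
qed

lemma eop_pow_None_iff:
  fixes p :: "real \<Rightarrow> 'v::real_vector" and m :: int
  assumes lin: "linear (coroot j)" and aj: "coroot j (alpha j) = 2"
    and "integral_profile (\<lambda>\<tau>. coroot j (p \<tau>)) m"
  shows "(eop alpha coroot j ^^ n) (Some p) = None \<longleftrightarrow> - m < int n"
  using assms(3)
proof (induction n arbitrary: p m)
  case 0
  then show ?case by (force simp: integral_profile_def)
next
  case (Suc n)
  have step: "(eop alpha coroot j ^^ Suc n) (Some p) = (eop alpha coroot j ^^ n) (eroot alpha coroot j p)"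
    by (simp add: funpow_Suc_right eop_def del: funpow.simps)
  show ?case
  proof (cases "m \<le> -1")
    case True
    obtain p' where "eroot alpha coroot j p = Some p'" "integral_profile (\<lambda>\<tau>. coroot j (p' \<tau>)) (m + 1)"
      using eroot_raises_minimum[where alpha = alpha and coroot = coroot and j = j and p = p,
          OF lin aj Suc.prems True] by blast
    then show ?thesis using step Suc.IH[of p' "m + 1"] by (simp; presburger)
  next
    case False
    have "m = 0" using Suc.prems False by (force simp: integral_profile_def)
    then have "Inf ((\<lambda>\<tau>. coroot j (p \<tau>)) ` {0..1}) = of_int m"
      using Suc.prems by (intro Inf_image_eq_minimum[of 0]) (auto simp: integral_profile_def)
    then have "eroot alpha coroot j p = None"
      using \<open>m = 0\<close> by (intro eroot_eq_None) auto
    then show ?thesis using step \<open>m = 0\<close> by (simp add: eop_pow_None)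
  qed
qed

section \<open>The profile of \<open>h\<^sub>i\<close> along the final path\<close>

text \<open>The function \<open>h\<^sub>i\<close> along the final path for \<open>i = i\<^sub>r\<close>: before \<open>f\<^sub>i\<^sup>b\<close> is applied it is
  \<open>H\<close>; afterwards \<open>min H b\<close> copies of \<open>\<alpha>\<^sub>i\<close> have been subtracted by time \<open>x\<close>, and each
  neighbour \<open>s \<in> N\<close> applied later subtracts \<open>min (min H b + E s) (c s)\<close> copies of \<open>\<alpha>\<^sub>s\<close>,
  each of which raises \<open>h\<^sub>i\<close> by one.\<close>

locale saturation_profile =
  fixes F H :: "real \<Rightarrow> real" and b :: nat and N :: "'s set"
    and E :: "'s \<Rightarrow> real \<Rightarrow> real" and c :: "'s \<Rightarrow> nat"
  assumes finite_N: "finite N"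
    and mono_H: "mono H" and H_0: "H 0 = 0" and cont_H: "continuous_on {0..1} H"
    and b_le_H_1: "real b \<le> H 1"
    and mono_E: "\<And>s. s \<in> N \<Longrightarrow> mono (E s)" and E_0: "\<And>s. s \<in> N \<Longrightarrow> E s 0 = 0"
    and F_eq: "\<And>x. x \<in> {0..1} \<Longrightarrow>
      F x = H x - 2 * min (H x) b + (\<Sum>s\<in>N. min (min (H x) b + E s x) (c s))"
begin

definition saturated :: "real \<Rightarrow> bool" where
  "saturated x \<longleftrightarrow> (\<forall>s\<in>N. real (c s) \<le> H x + E s x)"

lemma H_nonneg: "0 \<le> x \<Longrightarrow> 0 \<le> H x"
  using monoD[OF mono_H, of 0 x] H_0 by simp

lemma E_mono: "s \<in> N \<Longrightarrow> x \<le> y \<Longrightarrow> E s x \<le> E s y"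
  using mono_E by (simp add: monoD)

lemma E_nonneg: "s \<in> N \<Longrightarrow> 0 \<le> x \<Longrightarrow> 0 \<le> E s x"
  using E_mono[of s 0 x] E_0 by simp

lemma F_0: "F 0 = 0"
  using F_eq[of 0] H_0 E_0 by simp

lemma profile_lower_bound:
  assumes x: "x \<in> {0..1}"
  shows "min 0 (real (sum c N) - real b) \<le> F x"
proof -
  define m where "m = min (H x) (real b)"
  define S where "S = (\<Sum>s\<in>N. min (m + E s x) (c s))"
  have "min m (sum c N) \<le> (\<Sum>s\<in>N. min m (c s))"
    using min_sum_le_sum_min[of m N "\<lambda>s. real (c s)"] H_nonneg x by (simp add: m_def)
  also have "\<dots> \<le> S"
    unfolding S_def using E_nonneg x by (intro sum_mono min.mono) auto
  finally have "min m (sum c N) \<le> S" .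
  moreover have "F x = H x - 2 * m + S" using F_eq[OF x] by (simp add: m_def S_def)
  ultimately show ?thesis by (auto simp: m_def min_def split: if_splits)
qed

lemma profile_attains_lower_bound: "\<exists>\<tau>\<in>{0..1}. F \<tau> = min 0 (real (sum c N) - real b)"
proof (cases "b \<le> sum c N")
  case True
  then have "real b \<le> real (sum c N)" by (simp only: of_nat_le_iff)
  then show ?thesis using F_0 by (intro bexI[of _ 0]) simp_all
next
  case False
  obtain \<tau> where \<tau>: "\<tau> \<in> {0..1}" "H \<tau> = b"
    using IVT'[of H 0 "real b" 1] H_0 b_le_H_1 cont_H by auto
  have "(\<Sum>s\<in>N. min (min (H \<tau>) b + E s \<tau>) (c s)) \<le> sum c N"
    by (simp add: of_nat_sum sum_mono)
  moreover have "real (sum c N) < real b" using False by (simp only: of_nat_less_iff not_le)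
  ultimately have "F \<tau> \<le> min 0 (real (sum c N) - real b)"
    using F_eq[OF \<tau>(1)] \<tau>(2) by simp
  then show ?thesis using profile_lower_bound[OF \<tau>(1)] \<tau>(1) by (intro bexI[of _ \<tau>]) auto
qed

lemma profile_below_b:
  "x \<in> {0..1} \<Longrightarrow> H x \<le> b \<Longrightarrow> F x = - H x + (\<Sum>s\<in>N. min (H x + E s x) (c s))"
  using F_eq by (simp add: min_def)

lemma profile_above_b:
  assumes "x \<in> {0..1}" and "b \<le> H x"
  shows "F x = H x - 2 * b + (\<Sum>s\<in>N. min (b + E s x) (c s))"
proof -
  have "min (H x) b = b" using assms(2) by simp
  then show ?thesis using F_eq[OF assms(1)] by simp
qed

lemma profile_saturated:
  assumes "x \<in> {0..1}" and "H x \<le> b" and "saturated x"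
  shows "F x = sum c N - H x"
proof -
  have "(\<Sum>s\<in>N. min (H x + E s x) (c s)) = (\<Sum>s\<in>N. real (c s))"
    using assms(3) by (intro sum.cong) (auto simp: saturated_def min_def)
  then show ?thesis using profile_below_b[OF assms(1,2)] by simp
qed

lemma saturated_mono: "x \<le> y \<Longrightarrow> saturated x \<Longrightarrow> saturated y"
  unfolding saturated_def using monoD[OF mono_H] E_mono by (meson add_mono order_trans)

text \<open>While some neighbour is unsaturated its term grows at least as fast as \<open>H\<close>.\<close>

lemma profile_mono_unsaturated:
  assumes "0 \<le> x" and "x \<le> y" and "y \<le> 1" and "H y \<le> b" and "\<not> saturated y"
  shows "F x \<le> F y"
proof -
  obtain s0 where s0: "s0 \<in> N" "H y + E s0 y < c s0" using assms(5) by (auto simp: saturated_def not_le)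
  have H_xy: "H x \<le> H y" using monoD[OF mono_H assms(2)] .
  define d where "d s = min (H y + E s y) (c s) - min (H x + E s x) (c s)" for s
  have d_nonneg: "0 \<le> d s" if "s \<in> N" for s
    using H_xy E_mono[OF that assms(2)] by (auto simp: d_def min_def)
  have "H y - H x \<le> d s0"
    using s0 E_mono[OF s0(1) assms(2)] by (auto simp: d_def min_def)
  also have "\<dots> \<le> sum d N" by (rule member_le_sum[OF s0(1)]) (use d_nonneg finite_N in auto)
  also have "sum d N = F y - F x + H y - H x"
    using profile_below_b[of x] profile_below_b[of y] assms H_xy by (simp add: d_def sum_subtractf)
  finally show ?thesis by simp
qed

lemma profile_antimono_saturated:
  assumes "0 \<le> x" and "x \<le> y" and "y \<le> 1" and "H y \<le> b" and "saturated x"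
  shows "F y \<le> F x"
  using profile_saturated[of x] profile_saturated[of y] saturated_mono[OF assms(2,5)]
    monoD[OF mono_H assms(2)] assms by simp

lemma profile_mono_above_b:
  assumes "0 \<le> x" and "x \<le> y" and "y \<le> 1" and "b \<le> H x"
  shows "F x \<le> F y"
proof -
  have "(\<Sum>s\<in>N. min (b + E s x) (c s)) \<le> (\<Sum>s\<in>N. min (b + E s y) (c s))"
    using E_mono assms(2) by (intro sum_mono min.mono) auto
  then show ?thesis
    using profile_above_b[of x] profile_above_b[of y] monoD[OF mono_H assms(2)] assms by simp
qed

lemma negative_profile_saturated:
  assumes "x \<in> {0..1}" and "H x \<le> b" and "F x < 0"
  shows "saturated x"
  using profile_mono_unsaturated[of 0 x] F_0 assms by force

lemma integral_minima_profile: "integral_minima F"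
  unfolding integral_minima_def
proof (intro ballI allI impI)
  fix t k
  assume t: "t \<in> {0..1}" and above: "\<forall>s\<in>{0..t}. of_int k - 1 < F s"
    and below: "\<exists>s\<in>{0..t}. F s < of_int k"
  obtain s0 where s0: "s0 \<in> {0..t}" "F s0 < of_int k" using below by blast
  have "of_int k - 1 < F 0" using above t by simp
  then have "k \<le> 0" using F_0 by simp
  then have F_s0: "F s0 < 0" using s0 by linarith
  show "F t < of_int k"
  proof (cases "b \<le> H t")
    case True
    obtain \<tau> where \<tau>: "\<tau> \<in> {0..t}" "H \<tau> = b"
      using IVT'[of H 0 "real b" t] H_0 True t continuous_on_subset[OF cont_H, of "{0..t}"] by auto
    have "F \<tau> \<le> F s0"
    proof (cases "\<tau> \<le> s0")
      case True
      then show ?thesis using profile_mono_above_b[of \<tau> s0] \<tau> s0 t by simp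
    next
      case False
      then have "H s0 \<le> b" using monoD[OF mono_H, of s0 \<tau>] \<tau> by simp
      then have "saturated s0" using negative_profile_saturated s0 t F_s0 by simp
      then show ?thesis using profile_antimono_saturated[of s0 \<tau>] \<tau> s0 t False by simp
    qed
    then have "saturated \<tau>" using negative_profile_saturated[of \<tau>] \<tau> t F_s0 by simp
    define z where "z = int (sum c N) - int b"
    have "F \<tau> = of_int z"
      using profile_saturated[of \<tau>] \<open>saturated \<tau>\<close> \<tau> t by (simp add: z_def)
    moreover have "of_int k - 1 < F \<tau>" "F \<tau> < of_int k"
      using above \<tau> \<open>F \<tau> \<le> F s0\<close> s0 by auto
    ultimately have "of_int (k - 1) < (of_int z :: real)" "(of_int z :: real) < of_int k" by simp_all
    then have "k - 1 < z" "z < k" by (simp_all only: of_int_less_iff)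
    then show ?thesis by linarith
  next
    case False
    then have "H s0 \<le> b" using monoD[OF mono_H, of s0 t] s0 by simp
    then have "saturated s0" using negative_profile_saturated s0 t F_s0 by simp
    then show ?thesis using profile_antimono_saturated[of s0 t] s0 t False by simp
  qed
qed

end

section \<open>The path of the monomial\<close>

definition ramp :: "(real \<Rightarrow> real) \<Rightarrow> bool" where
  "ramp f \<longleftrightarrow> continuous_on UNIV f \<and> mono f \<and> f 0 = 0"

lemma ramp_nonneg: "ramp f \<Longrightarrow> 0 \<le> x \<Longrightarrow> 0 \<le> f x"
  unfolding ramp_def using monoD[of f 0 x] by auto

lemma ramp_clamp:
  assumes "ramp f" and "0 \<le> c"
  shows "ramp (\<lambda>x. min (max (f x) 0) c)"
proof -
  have "min (max (f x) 0) c \<le> min (max (f y) 0) c" if "x \<le> y" for x y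
    using assms(1) that unfolding ramp_def by (intro min.mono max.mono) (auto dest: monoD)
  then show ?thesis
    using assms unfolding ramp_def mono_def by (intro conjI allI impI continuous_intros) auto
qed

locale simply_laced_monomial =
  fixes A :: "'i \<Rightarrow> 'i \<Rightarrow> int" and alpha :: "'i \<Rightarrow> 'v::real_vector"
    and coroot :: "'i \<Rightarrow> 'v \<Rightarrow> real" and lam :: 'v
    and t :: nat and ii :: "nat \<Rightarrow> 'i" and b :: "nat \<Rightarrow> nat"
  assumes simply_laced: "simply_laced A" and linear_coroot: "\<And>i. linear (coroot i)"
    and coroot_alpha: "\<And>i j. coroot i (alpha j) = of_int (A i j)"
    and dominant_lam: "dominant_integral coroot lam" and inj_ii: "inj_on ii {1..t}"
begin

lemma A_diag: "A i i = 2"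
  using simply_laced by (simp add: simply_laced_def)

lemma A_sym: "A i j = A j i"
  using simply_laced by (simp add: simply_laced_def)

lemma A_off_diag: "i \<noteq> j \<Longrightarrow> A i j = 0 \<or> A i j = -1"
  using simply_laced by (simp add: simply_laced_def)

lemma A_nonpos: "i \<noteq> j \<Longrightarrow> A i j \<le> 0"
  using A_off_diag by force

lemma coroot_alpha_self: "coroot i (alpha i) = 2"
  by (simp add: coroot_alpha A_diag)

lemma coroot_lam_nonneg: "0 \<le> coroot i lam"
proof -
  have "coroot i lam \<in> \<nat>" using dominant_lam by (simp add: dominant_integral_def)
  then show ?thesis by (auto elim: Nats_cases)
qed

lemma ii_neq: "s \<in> {1..t} \<Longrightarrow> u \<in> {1..t} \<Longrightarrow> s \<noteq> u \<Longrightarrow> ii s \<noteq> ii u"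
  using inj_ii by (auto dest: inj_onD)

text \<open>\<open>path r\<close> is \<open>f\<^bsub>i\<^sub>r\<^esub>\<^bsup>b\<^sub>r\<^esup> \<cdots> f\<^bsub>i\<^sub>t\<^esub>\<^bsup>b\<^sub>t\<^esup> \<pi>\<^sub>\<lambda>\<close> when this is nonzero: by time \<open>x\<close>,
  \<open>coeff s x\<close> copies of \<open>\<alpha>\<^bsub>i\<^sub>s\<^esub>\<close> have been subtracted from \<open>x \<lambda>\<close>, namely \<open>height s x\<close>
  (the value of \<open>h\<^bsub>i\<^sub>s\<^esub>\<close> before \<open>f\<^bsub>i\<^sub>s\<^esub>\<^bsup>b\<^sub>s\<^esup>\<close> is applied) clamped to \<open>[0, b\<^sub>s]\<close>.\<close>

function coeff :: "nat \<Rightarrow> real \<Rightarrow> real" where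
  "coeff s x = (if t < s then 0 else
     min (max (coroot (ii s) lam * x - (\<Sum>u\<in>{s<..t}. of_int (A (ii s) (ii u)) * coeff u x)) 0) (real (b s)))"
  by pat_completeness auto
termination by (relation "Wellfounded.measure (\<lambda>(s, x). Suc t - s)") auto

declare coeff.simps [simp del]

definition pairing :: "'i \<Rightarrow> nat set \<Rightarrow> real \<Rightarrow> real" where
  "pairing j U x = coroot j lam * x - (\<Sum>u\<in>U. of_int (A j (ii u)) * coeff u x)"

abbreviation height :: "nat \<Rightarrow> real \<Rightarrow> real" where
  "height s \<equiv> pairing (ii s) {s<..t}"

definition path :: "nat \<Rightarrow> real \<Rightarrow> 'v" where
  "path r x = x *\<^sub>R lam - (\<Sum>s\<in>{r..t}. coeff s x *\<^sub>R alpha (ii s))"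

lemma coeff_eq: "s \<le> t \<Longrightarrow> coeff s x = min (max (height s x) 0) (real (b s))"
  by (subst coeff.simps) (simp add: pairing_def)

lemma coeff_beyond: "t < s \<Longrightarrow> coeff s x = 0"
  by (subst coeff.simps) simp

lemma coroot_path: "coroot j (path r x) = pairing j {r..t} x"
  using linear_coroot[of j]
  by (simp add: path_def pairing_def coroot_alpha linear_diff linear_sum linear_scale mult.commute)

lemma ramp_pairing:
  assumes "\<And>u. u \<in> U \<Longrightarrow> ramp (coeff u)" and "j \<notin> ii ` U"
  shows "ramp (pairing j U)"
proof -
  have A_U: "real_of_int (A j (ii u)) \<le> 0" if "u \<in> U" for u
    using A_nonpos[of j "ii u"] assms(2) that by auto
  have "continuous_on UNIV (pairing j U)"
    using assms(1) unfolding pairing_def[abs_def] ramp_def by (intro continuous_intros) auto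
  moreover have "mono (pairing j U)"
  proof
    fix x y :: real assume "x \<le> y"
    have "(\<Sum>u\<in>U. of_int (A j (ii u)) * coeff u y) \<le> (\<Sum>u\<in>U. of_int (A j (ii u)) * coeff u x)"
      using assms(1) A_U \<open>x \<le> y\<close> unfolding ramp_def
      by (intro sum_mono mult_left_mono_neg) (auto dest: monoD)
    then show "pairing j U x \<le> pairing j U y"
      using coroot_lam_nonneg \<open>x \<le> y\<close> by (simp add: pairing_def mult_left_mono diff_mono)
  qed
  moreover have "pairing j U 0 = 0" using assms(1) by (simp add: pairing_def ramp_def)
  ultimately show ?thesis by (simp add: ramp_def)
qed

lemma ii_notin_later:
  assumes "1 \<le> s"
  shows "ii s \<notin> ii ` {s<..t}"
proof
  assume "ii s \<in> ii ` {s<..t}"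
  then obtain u where "u \<in> {s<..t}" "ii s = ii u" by blast
  then show False using ii_neq[of s u] assms by auto
qed

lemma ramp_coeff: "1 \<le> s \<Longrightarrow> ramp (coeff s)"
proof (induction "Suc t - s" arbitrary: s rule: less_induct)
  case less
  show ?case
  proof (cases "t < s")
    case True
    then show ?thesis by (simp add: coeff_beyond ramp_def mono_def)
  next
    case False
    have "ramp (coeff u)" if "u \<in> {s<..t}" for u
      using less.hyps[of u] less.prems that by auto
    then have "ramp (height s)" using ii_notin_later[OF less.prems] by (rule ramp_pairing)
    then have "ramp (\<lambda>x. min (max (height s x) 0) (real (b s)))" by (rule ramp_clamp) simp
    moreover have "coeff s = (\<lambda>x. min (max (height s x) 0) (real (b s)))"
      using False by (auto simp: coeff_eq)
    ultimately show ?thesis by simp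
  qed
qed

lemma ramp_pairing_on: "U \<subseteq> {1..t} \<Longrightarrow> j \<notin> ii ` U \<Longrightarrow> ramp (pairing j U)"
  using ramp_coeff by (intro ramp_pairing) auto

lemma continuous_on_pairing:
  assumes "U \<subseteq> {1..t}"
  shows "continuous_on S (pairing j U)"
proof -
  have "continuous_on UNIV (coeff u)" if "u \<in> U" for u
    using ramp_coeff[of u] assms that by (auto simp: ramp_def)
  then have "continuous_on UNIV (pairing j U)"
    unfolding pairing_def[abs_def] by (intro continuous_intros) auto
  then show ?thesis by (rule continuous_on_subset) simp
qed

lemma ramp_height: "1 \<le> s \<Longrightarrow> ramp (height s)"
  using ramp_coeff ii_notin_later by (intro ramp_pairing) auto

lemma fop_pow_path:
  assumes r: "r \<in> {1..t}"
  shows "(fop alpha coroot (ii r) ^^ b r) (Some (path (Suc r))) =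
    (if real (b r) \<le> height r 1 then Some (path r) else None)"
proof -
  have h: "coroot (ii r) (path (Suc r) x) = height r x" for x
    by (simp add: coroot_path greaterThanAtMost_eq_atLeastAtMost_diff atLeastSucAtMost_greaterThanAtMost)
  have ramp: "ramp (height r)" using r by (intro ramp_height) simp
  have "lower_path alpha coroot (ii r) (real (b r)) (path (Suc r)) x = path (Suc r) x - coeff r x *\<^sub>R alpha (ii r)"
    for x using r by (simp add: lower_path_def h coeff_eq)
  moreover have "{r..t} = insert r {Suc r..t}" using r by auto
  ultimately have "lower_path alpha coroot (ii r) (real (b r)) (path (Suc r)) = path r"
    by (simp add: fun_eq_iff path_def algebra_simps)
  moreover have "continuous_on {0..1} (height r)" "mono (height r)" "height r 0 = 0"
    using ramp by (auto simp: ramp_def intro: continuous_on_subset)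
  ultimately show ?thesis
    using fop_pow_monotone_path[of coroot "ii r" alpha "path (Suc r)" "b r"]
    by (simp add: h linear_coroot coroot_alpha_self)
qed

lemma partial_monomial_eq:
  "1 \<le> r \<Longrightarrow> r \<le> Suc t \<Longrightarrow>
   foldr (\<lambda>r acc. (fop alpha coroot (ii r) ^^ b r) acc) [r..<Suc t] (Some (pi_hw lam)) =
   (if \<forall>s\<in>{r..t}. real (b s) \<le> height s 1 then Some (path r) else None)"
proof (induction "Suc t - r" arbitrary: r)
  case 0
  then have "pi_hw lam = path r" by (auto simp: pi_hw_def path_def)
  then show ?case using 0 by simp
next
  case (Suc d)
  then have r: "r \<in> {1..t}" by auto
  have "[r..<Suc t] = r # [Suc r..<Suc t]" and "{r..t} = insert r {Suc r..t}"
    using r by (auto simp: upt_conv_Cons)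
  then show ?case
    using Suc.hyps(1)[of "Suc r"] Suc.hyps(2) fop_pow_path[OF r] r
    by (auto simp: fop_pow_None)
qed

lemma monomial_eq:
  "monomial alpha coroot ii b t lam =
   (if \<forall>s\<in>{1..t}. real (b s) \<le> height s 1 then Some (path 1) else None)"
  unfolding monomial_def by (rule partial_monomial_eq) auto

lemma coeff_1_if_heights:
  assumes "\<forall>s\<in>{1..t}. real (b s) \<le> height s 1" and "s \<in> {1..t}"
  shows "coeff s 1 = b s"
proof -
  have "real (b s) \<le> height s 1" using assms by blast
  then show ?thesis using assms(2) by (simp add: coeff_eq)
qed

lemma coeff_1_if_lambda_bounds:
  assumes bounds: "\<forall>s\<in>{1..t}. real (b s) \<le> coroot (ii s) lam - (\<Sum>u\<in>{s<..t}. of_int (A (ii s) (ii u)) * b u)"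
  shows "s \<in> {1..t} \<Longrightarrow> coeff s 1 = b s"
proof (induction "Suc t - s" arbitrary: s rule: less_induct)
  case less
  have "coeff u 1 = b u" if "u \<in> {s<..t}" for u
    using less.hyps[of u] less.prems that by auto
  then have "height s 1 = coroot (ii s) lam - (\<Sum>u\<in>{s<..t}. of_int (A (ii s) (ii u)) * b u)"
    by (simp add: pairing_def)
  moreover have "real (b s) \<le> coroot (ii s) lam - (\<Sum>u\<in>{s<..t}. of_int (A (ii s) (ii u)) * b u)"
    using bounds less.prems by blast
  ultimately show ?case using less.prems by (simp add: coeff_eq)
qed

text \<open>Both conditions force \<open>coeff s 1 = b\<^sub>s\<close>, after which they coincide.\<close>

lemma heights_iff_lambda_bounds:
  "(\<forall>s\<in>{1..t}. real (b s) \<le> height s 1) \<longleftrightarrow>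
   (\<forall>s\<in>{1..t}. real (b s) \<le> coroot (ii s) lam - (\<Sum>u\<in>{s<..t}. of_int (A (ii s) (ii u)) * b u))"
proof -
  have height_1: "height s 1 = coroot (ii s) lam - (\<Sum>u\<in>{s<..t}. of_int (A (ii s) (ii u)) * b u)"
    if "\<forall>u\<in>{1..t}. coeff u 1 = b u" "s \<in> {1..t}" for s
    using that by (simp add: pairing_def)
  show ?thesis
    using coeff_1_if_heights coeff_1_if_lambda_bounds height_1 by (metis (no_types, lifting))
qed

lemma monomial_nonzero_iff:
  assumes "1 \<le> t"
  shows "monomial alpha coroot ii b t lam \<noteq> None \<longleftrightarrow>
    (coroot (ii t) lam \<ge> real (b t) \<and>
     (\<forall>r\<in>{1..<t}. coroot (ii r) lam \<ge> real (b r) + (\<Sum>s\<in>{r<..t}. real (b s) * of_int (A (ii s) (ii r)))))"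
proof -
  have "(\<Sum>u\<in>{s<..t}. of_int (A (ii s) (ii u)) * real (b u)) = (\<Sum>u\<in>{s<..t}. real (b u) * of_int (A (ii u) (ii s)))"
    for s by (simp add: A_sym[of "ii s"] mult.commute)
  moreover have "{1..t} = insert t {1..<t}" using assms by auto
  ultimately show ?thesis
    unfolding monomial_eq heights_iff_lambda_bounds by (auto simp: algebra_simps)
qed

definition neighbours_before :: "nat \<Rightarrow> nat set" where
  "neighbours_before r = {s \<in> {1..<r}. A (ii r) (ii s) = -1}"

lemma sum_before_eq_neighbours:
  fixes g :: "nat \<Rightarrow> real"
  assumes r: "r \<in> {1..t}"
  shows "(\<Sum>s\<in>{1..<r}. of_int (A (ii r) (ii s)) * g s) = - (\<Sum>s\<in>neighbours_before r. g s)"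
proof -
  have "of_int (A (ii r) (ii s)) * g s = (if s \<in> neighbours_before r then - g s else 0)"
    if "s \<in> {1..<r}" for s
    using A_off_diag[of "ii r" "ii s"] ii_neq[of r s] r that by (auto simp: neighbours_before_def)
  then have "(\<Sum>s\<in>{1..<r}. of_int (A (ii r) (ii s)) * g s) =
      (\<Sum>s\<in>{1..<r}. if s \<in> neighbours_before r then - g s else 0)"
    by (rule sum.cong[OF refl])
  also have "\<dots> = (\<Sum>s\<in>{s \<in> {1..<r}. s \<in> neighbours_before r}. - g s)"
    by (rule sum.inter_filter[symmetric]) simp
  also have "{s \<in> {1..<r}. s \<in> neighbours_before r} = neighbours_before r"
    by (auto simp: neighbours_before_def)
  finally show ?thesis by (simp add: sum_negf)
qed

lemma coeff_neighbour:
  assumes r: "r \<in> {1..t}" and s: "s \<in> neighbours_before r" and x: "0 \<le> x"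
  shows "coeff s x = min (coeff r x + pairing (ii s) ({s<..t} - {r}) x) (b s)"
proof -
  have s1: "s \<in> {1..<r}" and "A (ii s) (ii r) = -1"
    using s A_sym by (auto simp: neighbours_before_def)
  moreover have "r \<in> {s<..t}" using s1 r by auto
  then have "(\<Sum>u\<in>{s<..t}. of_int (A (ii s) (ii u)) * coeff u x) =
      of_int (A (ii s) (ii r)) * coeff r x + (\<Sum>u\<in>{s<..t} - {r}. of_int (A (ii s) (ii u)) * coeff u x)"
    by (intro sum.remove) auto
  ultimately have "height s x = coeff r x + pairing (ii s) ({s<..t} - {r}) x"
    by (simp add: pairing_def)
  then show ?thesis using ramp_nonneg[OF ramp_height x, of s] s1 r by (simp add: coeff_eq)
qed

lemma coroot_path_1_profile:
  assumes r: "r \<in> {1..t}" and x: "0 \<le> x"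
  shows "coroot (ii r) (path 1 x) = height r x - 2 * min (height r x) (b r) +
    (\<Sum>s\<in>neighbours_before r. min (min (height r x) (b r) + pairing (ii s) ({s<..t} - {r}) x) (b s))"
proof -
  define g where "g s = of_int (A (ii r) (ii s)) * coeff s x" for s
  have coeff_r: "coeff r x = min (height r x) (b r)"
    using ramp_nonneg[OF ramp_height x, of r] r by (simp add: coeff_eq)
  have "{1..t} = {1..<r} \<union> insert r {r<..t}" using r by auto
  then have "sum g {1..t} = sum g {1..<r} + sum g (insert r {r<..t})"
    by (simp only:) (rule sum.union_disjoint, auto)
  then have "sum g {1..t} = sum g {1..<r} + g r + sum g {r<..t}" by simp
  moreover have "sum g {1..<r} = - (\<Sum>s\<in>neighbours_before r. coeff s x)"
    unfolding g_def by (rule sum_before_eq_neighbours[OF r])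
  moreover have "g r = 2 * min (height r x) (b r)" using coeff_r by (simp add: g_def A_diag)
  ultimately show ?thesis
    using coeff_neighbour[OF r _ x] coeff_r
    by (simp add: coroot_path pairing_def g_def[symmetric])
qed

lemma eop_pow_path_unrelated:
  assumes "j \<notin> ii ` {1..t}"
  shows "(eop alpha coroot j ^^ n) (Some (path 1)) = None \<longleftrightarrow> 0 < n"
proof -
  define F where "F = (\<lambda>x. coroot j (path 1 x))"
  have ramp: "ramp F"
    unfolding F_def coroot_path using assms by (intro ramp_pairing_on) auto
  then have "continuous_on {0..1} F" "F 0 = 0" "\<And>x. x \<in> {0..1} \<Longrightarrow> 0 \<le> F x"
    by (auto simp: ramp_def intro: continuous_on_subset[of UNIV] ramp_nonneg)
  then have "integral_profile F 0"
    unfolding integral_profile_def by (auto intro: integral_minima_nonneg)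
  then show ?thesis
    using eop_pow_None_iff[where alpha = alpha and coroot = coroot and j = j, OF linear_coroot coroot_alpha_self] by (simp add: F_def)
qed

lemma eop_pow_path:
  assumes heights: "\<forall>s\<in>{1..t}. real (b s) \<le> height s 1" and r: "r \<in> {1..t}"
  shows "(eop alpha coroot (ii r) ^^ n) (Some (path 1)) = None \<longleftrightarrow>
    - min 0 (int (sum b (neighbours_before r)) - int (b r)) < int n"
proof -
  interpret profile: saturation_profile "\<lambda>x. coroot (ii r) (path 1 x)" "height r" "b r"
    "neighbours_before r" "\<lambda>s. pairing (ii s) ({s<..t} - {r})" b
  proof
    show "finite (neighbours_before r)" by (simp add: neighbours_before_def)
    show "mono (height r)" "height r 0 = 0" "continuous_on {0..1} (height r)"
      using ramp_height[of r] r by (auto simp: ramp_def intro: continuous_on_subset)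
    show "real (b r) \<le> height r 1" using heights r by blast
    fix s assume "s \<in> neighbours_before r"
    then have "s \<in> {1..<r}" by (simp add: neighbours_before_def)
    then have "ramp (pairing (ii s) ({s<..t} - {r}))"
      using ii_notin_later[of s] by (intro ramp_pairing_on) auto
    then show "mono (pairing (ii s) ({s<..t} - {r}))" "pairing (ii s) ({s<..t} - {r}) 0 = 0"
      by (simp_all add: ramp_def)
  qed (use coroot_path_1_profile[OF r] in auto)
  have "of_int (min 0 (int (sum b (neighbours_before r)) - int (b r))) =
      min 0 (real (sum b (neighbours_before r)) - real (b r))"
    by (simp only: of_int_min of_int_0 of_int_diff of_int_of_nat_eq)
  then have "integral_profile (\<lambda>x. coroot (ii r) (path 1 x)) (min 0 (int (sum b (neighbours_before r)) - int (b r)))"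
    using profile.profile_lower_bound profile.profile_attains_lower_bound
      profile.integral_minima_profile profile.F_0 continuous_on_pairing[of "{1..t}"]
    by (simp add: integral_profile_def coroot_path)
  then show ?thesis
    by (rule eop_pow_None_iff[where alpha = alpha and coroot = coroot and j = "ii r", OF linear_coroot coroot_alpha_self])
qed

lemma mu_dominant_path_iff:
  assumes heights: "\<forall>s\<in>{1..t}. real (b s) \<le> height s 1" and mu: "dominant_integral coroot mu"
  shows "mu_dominant alpha coroot mu (Some (path 1)) \<longleftrightarrow>
    (\<forall>r\<in>{1..t}. real (b r) - real (sum b (neighbours_before r)) \<le> coroot (ii r) mu)"
proof -
  have mu_nat: "real (nat \<lfloor>coroot j mu\<rfloor>) = coroot j mu" for j
  proof -
    have "coroot j mu \<in> \<nat>" using mu by (simp add: dominant_integral_def)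
    then show ?thesis by (auto elim: Nats_cases)
  qed
  have killed: "(eop alpha coroot (ii r) ^^ (nat \<lfloor>coroot (ii r) mu\<rfloor> + 1)) (Some (path 1)) = None \<longleftrightarrow>
      real (b r) - real (sum b (neighbours_before r)) \<le> coroot (ii r) mu" if r: "r \<in> {1..t}" for r
    using eop_pow_path[OF heights r] neg_min_less_Suc_iff mu_nat by (simp only:)
  show ?thesis
  proof
    assume "mu_dominant alpha coroot mu (Some (path 1))"
    then show "\<forall>r\<in>{1..t}. real (b r) - real (sum b (neighbours_before r)) \<le> coroot (ii r) mu"
      using killed unfolding mu_dominant_def by blast
  next
    assume bounds: "\<forall>r\<in>{1..t}. real (b r) - real (sum b (neighbours_before r)) \<le> coroot (ii r) mu"
    show "mu_dominant alpha coroot mu (Some (path 1))"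
      unfolding mu_dominant_def
    proof
      fix j
      show "(eop alpha coroot j ^^ (nat \<lfloor>coroot j mu\<rfloor> + 1)) (Some (path 1)) = None"
      proof (cases "j \<in> ii ` {1..t}")
        case True
        then obtain r where "r \<in> {1..t}" "j = ii r" by blast
        then show ?thesis using killed bounds by simp
      next
        case False
        then show ?thesis using eop_pow_path_unrelated[OF False, of "nat \<lfloor>coroot j mu\<rfloor> + 1"] by simp
      qed
    qed
  qed
qed

lemma neighbour_bounds_iff:
  assumes "1 \<le> t"
  shows "(\<forall>r\<in>{1..t}. real (b r) - real (sum b (neighbours_before r)) \<le> coroot (ii r) mu) \<longleftrightarrow>
    (coroot (ii 1) mu \<ge> real (b 1) \<and>
     (\<forall>r\<in>{2..t}. coroot (ii r) mu \<ge> real (b r) + (\<Sum>s\<in>{1..<r}. real (b s) * of_int (A (ii s) (ii r)))))"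
proof -
  have "(\<Sum>s\<in>{1..<r}. real (b s) * of_int (A (ii s) (ii r))) = - real (sum b (neighbours_before r))"
    if "r \<in> {1..t}" for r
    using sum_before_eq_neighbours[OF that, of "\<lambda>s. real (b s)"]
    by (simp add: A_sym[of "ii r"] mult.commute)
  moreover have "{1..t} = insert 1 {2..t}" using assms by auto
  moreover have "neighbours_before 1 = {}" by (simp add: neighbours_before_def)
  ultimately show ?thesis by auto
qed

lemma mu_dominant_monomial_iff:
  assumes "1 \<le> t" and "dominant_integral coroot mu" and "monomial alpha coroot ii b t lam \<noteq> None"
  shows "mu_dominant alpha coroot mu (monomial alpha coroot ii b t lam) \<longleftrightarrow>
    (coroot (ii 1) mu \<ge> real (b 1) \<and>
     (\<forall>r\<in>{2..t}. coroot (ii r) mu \<ge> real (b r) + (\<Sum>s\<in>{1..<r}. real (b s) * of_int (A (ii s) (ii r)))))"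
proof -
  have "\<forall>s\<in>{1..t}. real (b s) \<le> height s 1"
    using assms(3) by (auto simp: monomial_eq split: if_splits)
  then show ?thesis
    using mu_dominant_path_iff[OF _ assms(2)] neighbour_bounds_iff[OF assms(1)] by (simp add: monomial_eq)
qed

end

theorem mainTheorem5:
  fixes A :: "'i::finite \<Rightarrow> 'i \<Rightarrow> int"
    and alpha :: "'i \<Rightarrow> 'v::real_vector"
    and coroot :: "'i \<Rightarrow> 'v \<Rightarrow> real"
    and lam mu :: 'v
    and t :: nat and ii :: "nat \<Rightarrow> 'i" and b :: "nat \<Rightarrow> nat"
  assumes "simply_laced A"
    and "\<forall>i. linear (coroot i)"
    and "\<forall>i j. coroot i (alpha j) = of_int (A i j)"
    and "dominant_integral coroot lam"
    and "dominant_integral coroot mu"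
    and "t \<ge> 1"
    and "inj_on ii {1..t}"
  shows "(monomial alpha coroot ii b t lam \<noteq> None \<and>
          mu_dominant alpha coroot mu (monomial alpha coroot ii b t lam))
     \<longleftrightarrow> (coroot (ii t) lam \<ge> real (b t) \<and> coroot (ii 1) mu \<ge> real (b 1) \<and>
          (\<forall>r\<in>{2..t}. coroot (ii r) mu \<ge> real (b r) + (\<Sum>s\<in>{1..<r}. real (b s) * of_int (A (ii s) (ii r)))) \<and>
          (\<forall>r\<in>{1..<t}. coroot (ii r) lam \<ge> real (b r) + (\<Sum>s\<in>{r<..t}. real (b s) * of_int (A (ii s) (ii r)))))"
proof -
  interpret simply_laced_monomial A alpha coroot lam t ii b
    using assms unfolding simply_laced_monomial_def by auto
  show ?thesis
    using monomial_nonzero_iff[OF assms(6)] mu_dominant_monomial_iff[OF assms(6,5)] by blast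
qed

end
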